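(* Let $M=L_1\,C_1\,L_2\,C_2\,L_3$ be a unitary on $\mathbb{C}^2\otimes\mathbb{C}^2\otimes\mathbb{C}^2$, where $L_1,L_2,L_3$ are local unitaries (each of the form $V\otimes W\otimes X$ with $V,W,X$ $2\times2$ unitaries), and each $C_k$ is a CNOT gate acting on some ordered pair of distinct qubits among $A,B,C$ (one qubit as control, another as target) and as the identity on the remaining qubit. Then $\mathrm{sr}(M)\in\{1,2,4\}$.
   Context: $T=|0\rangle\langle0|\otimes I_2+|1\rangle\langle1|\otimes\sigma_1$ is the CNOT gate on two qubits (first control, second target), where $\sigma_1=\begin{bmatrix}0&1\\1&0\end{bmatrix}$. For a matrix $U$ on $\mathbb{C}^2\otimes\mathbb{C}^2\otimes\mathbb{C}^2$ (systems $A,B,C$), its Schmidt rank $\mathrm{sr}(U)$ is the least integer $r$ such that $U=\sum_{j=1}^r A_j\otimes B_j\otimes C_j$ with $A_j,B_j,C_j$ complex $2\times 2$ matrices (i.e. the tensor rank of $U$). *)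

theory Defs
  imports Complex_Main
begin

text \<open>A qubit basis index is a bool (False = |0>, True = |1>). 2x2 matrices are
functions bool => bool => complex; matrices on C^2 (x) C^2 (x) C^2 (systems A,B,C)
are indexed by triples (a,b,c).\<close>

type_synonym mat2 = "bool \<Rightarrow> bool \<Rightarrow> complex"
type_synonym idx3 = "bool \<times> bool \<times> bool"
type_synonym mat8 = "idx3 \<Rightarrow> idx3 \<Rightarrow> complex"

definition mmul2 :: "mat2 \<Rightarrow> mat2 \<Rightarrow> mat2" where
  "mmul2 M N = (\<lambda>i k. \<Sum>j\<in>UNIV. M i j * N j k)"

definition mmul8 :: "mat8 \<Rightarrow> mat8 \<Rightarrow> mat8" where
  "mmul8 M N = (\<lambda>i k. \<Sum>j\<in>UNIV. M i j * N j k)"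

definition adj2 :: "mat2 \<Rightarrow> mat2" where
  "adj2 M = (\<lambda>i j. cnj (M j i))"

definition id2 :: mat2 where
  "id2 = (\<lambda>i j. if i = j then 1 else 0)"

definition unitary2 :: "mat2 \<Rightarrow> bool" where
  "unitary2 V \<longleftrightarrow> mmul2 V (adj2 V) = id2 \<and> mmul2 (adj2 V) V = id2"

definition tensor3 :: "mat2 \<Rightarrow> mat2 \<Rightarrow> mat2 \<Rightarrow> mat8" where
  "tensor3 A B C = (\<lambda>(a,b,c) (a',b',c'). A a a' * B b b' * C c c')"

definition local_unitary :: "mat8 \<Rightarrow> bool" where
  "local_unitary L \<longleftrightarrow> (\<exists>V W X. unitary2 V \<and> unitary2 W \<and> unitary2 X \<and> L = tensor3 V W X)"

definition proj0 :: mat2 where "proj0 = (\<lambda>i j. if i = False \<and> j = False then 1 else 0)"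
definition proj1 :: mat2 where "proj1 = (\<lambda>i j. if i = True \<and> j = True then 1 else 0)"
definition sigma1 :: mat2 where "sigma1 = (\<lambda>i j. if i \<noteq> j then 1 else 0)"

text \<open>Place 2x2 matrices on the qubits: qubit 0 = A, 1 = B, 2 = C.\<close>
definition tensor_at :: "(nat \<Rightarrow> mat2) \<Rightarrow> mat8" where
  "tensor_at f = tensor3 (f 0) (f 1) (f 2)"

definition cnot :: "nat \<Rightarrow> nat \<Rightarrow> mat8" where
  "cnot c t = (\<lambda>i j.
     tensor_at (\<lambda>q. if q = c then proj0 else id2) i j
   + tensor_at (\<lambda>q. if q = c then proj1 else if q = t then sigma1 else id2) i j)"

definition is_cnot :: "mat8 \<Rightarrow> bool" where
  "is_cnot C \<longleftrightarrow> (\<exists>c t. c < 3 \<and> t < 3 \<and> c \<noteq> t \<and> C = cnot c t)"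

definition schmidt_rank :: "mat8 \<Rightarrow> nat" where
  "schmidt_rank U = (LEAST r. \<exists>A B C :: nat \<Rightarrow> mat2.
      U = (\<lambda>i j. \<Sum>k<r. tensor3 (A k) (B k) (C k) i j))"

end

theory Submission
  imports Defs "HOL-Analysis.Analysis"
begin

text \<open>Local unitaries do not change the tensor rank, and neither does relabelling the
  qubits or reversing a CNOT (Hadamards on both of its qubits swap control and target). Since any
  two edges of the triangle on the qubits A, B, C are equal or share a vertex, the product
  reduces to one of two normal forms: the same CNOT twice, or two CNOTs with a common control.
  Both are permutation matrices applied to a local unitary V (x) W (x) X, so they have explicit
  decompositions with four product terms, which collapse to two terms exactly when a unitary
  factor has a zero entry (in the Hadamard basis as well, for W in the first normal form). In the
  remaining case, flattening the systems A, C against B and pairing with suitable product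
  functionals exhibits a 4 x 4 identity matrix, so the rank is 4.\<close>

lemma sum_UNIV_bool: "(\<Sum>x\<in>UNIV. f x) = f False + f (True::bool)"
  by (simp add: UNIV_bool)

lemma sum_UNIV_idx3: "(\<Sum>x\<in>UNIV. f x) =
  (\<Sum>a\<in>UNIV. \<Sum>b\<in>UNIV. \<Sum>c\<in>UNIV. f ((a, b, c) :: idx3))"
  by (simp add: sum.cartesian_product UNIV_Times_UNIV[symmetric] del: UNIV_Times_UNIV)

section \<open>Tensor rank\<close>

definition has_decomposition :: "mat8 \<Rightarrow> nat \<Rightarrow> bool" where
  "has_decomposition T r \<longleftrightarrow>
     (\<exists>A B C :: nat \<Rightarrow> mat2. T = (\<lambda>i j. \<Sum>k<r. tensor3 (A k) (B k) (C k) i j))"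

lemma schmidt_rank_eq_Least: "schmidt_rank T = (LEAST r. has_decomposition T r)"
  unfolding schmidt_rank_def has_decomposition_def ..

lemma has_decomposition_schmidt_rank:
  "has_decomposition T r \<Longrightarrow> has_decomposition T (schmidt_rank T)"
  unfolding schmidt_rank_eq_Least by (rule LeastI)

lemma schmidt_rank_le: "has_decomposition T r \<Longrightarrow> schmidt_rank T \<le> r"
  unfolding schmidt_rank_eq_Least by (rule Least_le)

lemma schmidt_rank_eqI:
  "has_decomposition T r \<Longrightarrow> (\<And>s. has_decomposition T s \<Longrightarrow> r \<le> s) \<Longrightarrow> schmidt_rank T = r"
  unfolding schmidt_rank_eq_Least by (rule Least_equality)

lemma schmidt_rank_cong:
  "(\<And>r. has_decomposition S r \<longleftrightarrow> has_decomposition T r) \<Longrightarrow> schmidt_rank S = schmidt_rank T"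
  unfolding schmidt_rank_eq_Least by presburger

lemma has_decomposition_0_iff: "has_decomposition T 0 \<longleftrightarrow> T = (\<lambda>i j. 0)"
  unfolding has_decomposition_def by auto

lemma schmidt_rank_1_or_2:
  assumes "has_decomposition T 2" and "T \<noteq> (\<lambda>i j. 0)"
  shows "schmidt_rank T \<in> {1, 2}"
proof -
  have "schmidt_rank T \<noteq> 0"
    using has_decomposition_schmidt_rank[OF assms(1)] assms(2)
    by (metis has_decomposition_0_iff)
  then show ?thesis using schmidt_rank_le[OF assms(1)] by auto
qed

lemma has_decomposition_2I:
  "T = (\<lambda>i j. tensor3 Aa Ba Ca i j + tensor3 Ab Bb Cb i j) \<Longrightarrow> has_decomposition T 2"
  unfolding has_decomposition_def
  by (rule exI[of _ "\<lambda>k. if k = 0 then Aa else Ab"], rule exI[of _ "\<lambda>k. if k = 0 then Ba else Bb"],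
      rule exI[of _ "\<lambda>k. if k = 0 then Ca else Cb"]) (simp add: numeral_2_eq_2)

lemma has_decomposition_4I:
  "T = (\<lambda>i j. tensor3 Aa Ba Ca i j + tensor3 Ab Bb Cb i j + tensor3 Ac Bc Cc i j
              + tensor3 Ad Bd Cd i j) \<Longrightarrow> has_decomposition T 4"
  unfolding has_decomposition_def
  by (rule exI[of _ "\<lambda>k. if k = 0 then Aa else if k = 1 then Ab else if k = 2 then Ac else Ad"],
      rule exI[of _ "\<lambda>k. if k = 0 then Ba else if k = 1 then Bb else if k = 2 then Bc else Bd"],
      rule exI[of _ "\<lambda>k. if k = 0 then Ca else if k = 1 then Cb else if k = 2 then Cc else Cd"])
     (simp add: eval_nat_numeral add.assoc)

lemma mmul8_tensor3:
  "mmul8 (tensor3 A B C) (tensor3 A' B' C') = tensor3 (mmul2 A A') (mmul2 B B') (mmul2 C C')"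
  unfolding mmul8_def tensor3_def mmul2_def
  by (auto simp: fun_eq_iff sum_UNIV_idx3 sum_UNIV_bool algebra_simps)

lemma mmul8_assoc: "mmul8 (mmul8 A B) C = mmul8 A (mmul8 B C)"
  unfolding mmul8_def
  by (auto simp: fun_eq_iff sum_distrib_left sum_distrib_right mult.assoc intro: sum.swap)

lemma mmul8_sum_left: "mmul8 L (\<lambda>i j. \<Sum>k<r. F k i j) = (\<lambda>i j. \<Sum>k<r. mmul8 L (F k) i j)"
  unfolding mmul8_def by (auto simp: fun_eq_iff sum_distrib_left intro: sum.swap)

lemma mmul8_sum_right: "mmul8 (\<lambda>i j. \<Sum>k<r. F k i j) L = (\<lambda>i j. \<Sum>k<r. mmul8 (F k) L i j)"
  unfolding mmul8_def by (auto simp: fun_eq_iff sum_distrib_right intro: sum.swap)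

lemma mmul8_add_left: "mmul8 (\<lambda>i j. A i j + B i j) C = (\<lambda>i j. mmul8 A C i j + mmul8 B C i j)"
  unfolding mmul8_def by (simp add: fun_eq_iff algebra_simps sum.distrib)

lemma mmul8_add_right: "mmul8 C (\<lambda>i j. A i j + B i j) = (\<lambda>i j. mmul8 C A i j + mmul8 C B i j)"
  unfolding mmul8_def by (simp add: fun_eq_iff algebra_simps sum.distrib)

lemma has_decomposition_mmul8_tensor3:
  assumes "has_decomposition T r"
  shows "has_decomposition (mmul8 (tensor3 V W X) T) r"
    and "has_decomposition (mmul8 T (tensor3 V W X)) r"
  using assms unfolding has_decomposition_def
  by (auto simp: mmul8_sum_left mmul8_sum_right mmul8_tensor3) force+

lemma mmul2_assoc: "mmul2 (mmul2 A B) C = mmul2 A (mmul2 B C)"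
  unfolding mmul2_def by (simp add: fun_eq_iff sum_UNIV_bool algebra_simps)

lemma adj2_mmul2: "adj2 (mmul2 A B) = mmul2 (adj2 B) (adj2 A)"
  unfolding mmul2_def adj2_def by (simp add: fun_eq_iff sum_UNIV_bool algebra_simps)

lemma mmul2_id2 [simp]: "mmul2 id2 A = A" "mmul2 A id2 = A"
  unfolding mmul2_def id2_def by (simp_all add: fun_eq_iff sum_UNIV_bool)

lemma unitary2_id2: "unitary2 id2"
  unfolding unitary2_def adj2_def id2_def mmul2_def by (simp add: fun_eq_iff sum_UNIV_bool)

lemma unitary2_mmul2: "unitary2 A \<Longrightarrow> unitary2 B \<Longrightarrow> unitary2 (mmul2 A B)"
  unfolding unitary2_def adj2_mmul2 by (metis mmul2_assoc mmul2_id2)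

lemma mmul8_id8:
  "mmul8 (tensor3 id2 id2 id2) T = T" "mmul8 T (tensor3 id2 id2 id2) = T"
proof -
  have id8: "tensor3 id2 id2 id2 = (\<lambda>i j. if i = j then 1 else 0)"
    by (auto simp: tensor3_def id2_def fun_eq_iff)
  show "mmul8 (tensor3 id2 id2 id2) T = T" "mmul8 T (tensor3 id2 id2 id2) = T"
    unfolding mmul8_def id8
    by (simp_all add: fun_eq_iff if_distrib[where f="\<lambda>x. x * _"] if_distrib[where f="\<lambda>x. _ * x"]
        cong: if_cong)
qed

lemma schmidt_rank_local_unitary:
  assumes "unitary2 V" "unitary2 W" "unitary2 X"
  shows "schmidt_rank (mmul8 (tensor3 V W X) T) = schmidt_rank T"
    and "schmidt_rank (mmul8 T (tensor3 V W X)) = schmidt_rank T"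
proof -
  have inv: "mmul8 (tensor3 (adj2 V) (adj2 W) (adj2 X)) (tensor3 V W X) = tensor3 id2 id2 id2"
    "mmul8 (tensor3 V W X) (tensor3 (adj2 V) (adj2 W) (adj2 X)) = tensor3 id2 id2 id2"
    using assms by (simp_all add: mmul8_tensor3 unitary2_def)
  show "schmidt_rank (mmul8 (tensor3 V W X) T) = schmidt_rank T"
    using has_decomposition_mmul8_tensor3(1)[of "mmul8 (tensor3 V W X) T" _ "adj2 V" "adj2 W"
        "adj2 X"]
      has_decomposition_mmul8_tensor3(1)[of T _ V W X]
    by (intro schmidt_rank_cong) (auto simp: mmul8_assoc[symmetric] inv mmul8_id8)
  show "schmidt_rank (mmul8 T (tensor3 V W X)) = schmidt_rank T"
    using has_decomposition_mmul8_tensor3(2)[of "mmul8 T (tensor3 V W X)" _ "adj2 V" "adj2 W"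
        "adj2 X"]
      has_decomposition_mmul8_tensor3(2)[of T _ V W X]
    by (intro schmidt_rank_cong) (auto simp: mmul8_assoc inv mmul8_id8)
qed

section \<open>Symmetries of CNOT sandwiches\<close>

definition swap_AB :: "mat8 \<Rightarrow> mat8" where
  "swap_AB T = (\<lambda>(a,b,c) (a',b',c'). T (b,a,c) (b',a',c'))"

definition swap_BC :: "mat8 \<Rightarrow> mat8" where
  "swap_BC T = (\<lambda>(a,b,c) (a',b',c'). T (a,c,b) (a',c',b'))"

lemma swap_AB_mmul8: "swap_AB (mmul8 M N) = mmul8 (swap_AB M) (swap_AB N)"
  unfolding swap_AB_def mmul8_def
  by (auto simp: fun_eq_iff
      intro!: sum.reindex_bij_witness[where i="\<lambda>(a,b,c). (b,a,c)" and j="\<lambda>(a,b,c). (b,a,c)"])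

lemma swap_BC_mmul8: "swap_BC (mmul8 M N) = mmul8 (swap_BC M) (swap_BC N)"
  unfolding swap_BC_def mmul8_def
  by (auto simp: fun_eq_iff
      intro!: sum.reindex_bij_witness[where i="\<lambda>(a,b,c). (a,c,b)" and j="\<lambda>(a,b,c). (a,c,b)"])

lemma swap_AB_tensor3: "swap_AB (tensor3 A B C) = tensor3 B A C"
  unfolding swap_AB_def tensor3_def by (simp add: fun_eq_iff)

lemma swap_BC_tensor3: "swap_BC (tensor3 A B C) = tensor3 A C B"
  unfolding swap_BC_def tensor3_def by (simp add: fun_eq_iff)

lemma swap_AB_add: "swap_AB (\<lambda>i j. S i j + T i j) = (\<lambda>i j. swap_AB S i j + swap_AB T i j)"
  unfolding swap_AB_def by (simp add: fun_eq_iff)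

lemma swap_BC_add: "swap_BC (\<lambda>i j. S i j + T i j) = (\<lambda>i j. swap_BC S i j + swap_BC T i j)"
  unfolding swap_BC_def by (simp add: fun_eq_iff)

lemma swap_AB_involutive [simp]: "swap_AB (swap_AB T) = T"
  unfolding swap_AB_def by (simp add: fun_eq_iff)

lemma swap_BC_involutive [simp]: "swap_BC (swap_BC T) = T"
  unfolding swap_BC_def by (simp add: fun_eq_iff)

lemma has_decomposition_swap_AB: "has_decomposition T r \<Longrightarrow> has_decomposition (swap_AB T) r"
  unfolding has_decomposition_def swap_AB_def tensor3_def
  by (elim exE, rule_tac x=B in exI, rule_tac x=A in exI, rule_tac x=C in exI)
     (auto simp: fun_eq_iff mult_ac)

lemma has_decomposition_swap_BC: "has_decomposition T r \<Longrightarrow> has_decomposition (swap_BC T) r"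
  unfolding has_decomposition_def swap_BC_def tensor3_def
  by (elim exE, rule_tac x=A in exI, rule_tac x=C in exI, rule_tac x=B in exI)
     (auto simp: fun_eq_iff mult_ac)

lemma schmidt_rank_swap_AB [simp]: "schmidt_rank (swap_AB T) = schmidt_rank T"
  by (metis schmidt_rank_cong has_decomposition_swap_AB swap_AB_involutive)

lemma schmidt_rank_swap_BC [simp]: "schmidt_rank (swap_BC T) = schmidt_rank T"
  by (metis schmidt_rank_cong has_decomposition_swap_BC swap_BC_involutive)

lemma swap_AB_tensor_at: "swap_AB (tensor_at f) = tensor_at (f \<circ> Transposition.transpose 0 1)"
  unfolding tensor_at_def swap_AB_tensor3 by simp

lemma swap_BC_tensor_at: "swap_BC (tensor_at f) = tensor_at (f \<circ> Transposition.transpose 1 2)"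
  unfolding tensor_at_def swap_BC_tensor3 by simp

lemma transpose_eq_transpose_iff:
  "Transposition.transpose a b q = c \<longleftrightarrow> q = Transposition.transpose a b c"
  by (metis transpose_involutory)

lemma swap_AB_cnot:
  "swap_AB (cnot c t) = cnot (Transposition.transpose 0 1 c) (Transposition.transpose 0 1 t)"
  unfolding cnot_def swap_AB_add swap_AB_tensor_at by (simp only: o_def transpose_eq_transpose_iff)

lemma swap_BC_cnot:
  "swap_BC (cnot c t) = cnot (Transposition.transpose 1 2 c) (Transposition.transpose 1 2 t)"
  unfolding cnot_def swap_BC_add swap_BC_tensor_at by (simp only: o_def transpose_eq_transpose_iff)

definition sandwich_rank_124 :: "nat \<Rightarrow> nat \<Rightarrow> nat \<Rightarrow> nat \<Rightarrow> bool" where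
  "sandwich_rank_124 c1 t1 c2 t2 \<longleftrightarrow> (\<forall>V W X. unitary2 V \<longrightarrow> unitary2 W \<longrightarrow> unitary2 X \<longrightarrow>
     schmidt_rank (mmul8 (cnot c1 t1) (mmul8 (tensor3 V W X) (cnot c2 t2))) \<in> {1, 2, 4})"

lemma sandwich_rank_124_swap_AB:
  assumes "sandwich_rank_124 c1 t1 c2 t2"
  shows "sandwich_rank_124 (Transposition.transpose 0 1 c1) (Transposition.transpose 0 1 t1)
           (Transposition.transpose 0 1 c2) (Transposition.transpose 0 1 t2)"
  unfolding sandwich_rank_124_def
proof (intro allI impI)
  fix V W X :: mat2
  assume "unitary2 V" "unitary2 W" "unitary2 X"
  then have "schmidt_rank (swap_AB (mmul8 (cnot c1 t1) (mmul8 (tensor3 W V X) (cnot c2 t2))))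
      \<in> {1, 2, 4}"
    using assms unfolding sandwich_rank_124_def by simp
  then show "schmidt_rank (mmul8
      (cnot (Transposition.transpose 0 1 c1) (Transposition.transpose 0 1 t1)) (mmul8 (tensor3 V W X)
        (cnot (Transposition.transpose 0 1 c2) (Transposition.transpose 0 1 t2)))) \<in> {1, 2, 4}"
    by (simp only: swap_AB_mmul8 swap_AB_cnot swap_AB_tensor3)
qed

lemma sandwich_rank_124_swap_BC:
  assumes "sandwich_rank_124 c1 t1 c2 t2"
  shows "sandwich_rank_124 (Transposition.transpose 1 2 c1) (Transposition.transpose 1 2 t1)
           (Transposition.transpose 1 2 c2) (Transposition.transpose 1 2 t2)"
  unfolding sandwich_rank_124_def
proof (intro allI impI)
  fix V W X :: mat2
  assume "unitary2 V" "unitary2 W" "unitary2 X"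
  then have "schmidt_rank (swap_BC (mmul8 (cnot c1 t1) (mmul8 (tensor3 V X W) (cnot c2 t2))))
      \<in> {1, 2, 4}"
    using assms unfolding sandwich_rank_124_def by simp
  then show "schmidt_rank (mmul8
      (cnot (Transposition.transpose 1 2 c1) (Transposition.transpose 1 2 t1)) (mmul8 (tensor3 V W X)
        (cnot (Transposition.transpose 1 2 c2) (Transposition.transpose 1 2 t2)))) \<in> {1, 2, 4}"
    by (simp only: swap_BC_mmul8 swap_BC_cnot swap_BC_tensor3)
qed

definition hadamard_sign :: "bool \<Rightarrow> bool \<Rightarrow> complex" where
  "hadamard_sign i j = (if i \<and> j then -1 else 1)"

definition hadamard :: mat2 where
  "hadamard = (\<lambda>i j. hadamard_sign i j / complex_of_real (sqrt 2))"

lemma hadamard_times_hadamard: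
  "hadamard i j * hadamard k l = hadamard_sign i j * hadamard_sign k l / 2"
proof -
  have "complex_of_real (sqrt 2) * complex_of_real (sqrt 2) = 2"
    by (simp flip: of_real_mult)
  then show ?thesis unfolding hadamard_def by simp
qed

lemma mmul2_hadamard_hadamard: "mmul2 hadamard hadamard = id2"
  unfolding mmul2_def id2_def by (simp add: fun_eq_iff sum_UNIV_bool
      hadamard_times_hadamard hadamard_sign_def)

lemma unitary2_hadamard: "unitary2 hadamard"
proof -
  have "adj2 hadamard = hadamard"
    unfolding adj2_def hadamard_def hadamard_sign_def by (simp add: fun_eq_iff)
  then show ?thesis unfolding unitary2_def by (simp add: mmul2_hadamard_hadamard)
qed

lemma mmul8_tensor_at: "mmul8 (tensor_at f) (tensor_at g) = tensor_at (\<lambda>q. mmul2 (f q) (g q))"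
  unfolding tensor_at_def mmul8_tensor3 ..

lemma hadamard_conj_cnot:
  assumes "c < 3" "t < 3" "c \<noteq> t"
  defines "H \<equiv> tensor_at (\<lambda>q. if q = c \<or> q = t then hadamard else id2)"
  shows "mmul8 H (mmul8 (cnot c t) H) = cnot t c"
proof -
  have HP0H: "mmul2 hadamard (mmul2 proj0 hadamard) = (\<lambda>i j. 1/2)"
    unfolding mmul2_def proj0_def by (simp add: fun_eq_iff sum_UNIV_bool
      hadamard_times_hadamard hadamard_sign_def)
  have HP1H: "mmul2 hadamard (mmul2 proj1 hadamard) = (\<lambda>i j. if i = j then 1/2 else -1/2)"
    unfolding mmul2_def proj1_def by (simp add: fun_eq_iff sum_UNIV_bool
      hadamard_times_hadamard hadamard_sign_def)
  have HXH: "mmul2 hadamard (mmul2 sigma1 hadamard)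
      = (\<lambda>i j. if i = j then (if i then -1 else 1) else 0)"
    unfolding mmul2_def sigma1_def by (simp add: fun_eq_iff sum_UNIV_bool
      hadamard_times_hadamard hadamard_sign_def)
  have "(c, t) \<in> {(0,1), (0,2), (1,0), (1,2), (2,0), (2,1)}"
    using assms by auto
  then show ?thesis
    unfolding H_def cnot_def mmul8_add_left mmul8_add_right mmul8_tensor_at
    by (elim insertE emptyE; simp add: tensor_at_def HP0H HP1H HXH mmul2_hadamard_hadamard;
        auto simp: fun_eq_iff tensor3_def proj0_def proj1_def sigma1_def id2_def)
qed

lemma sandwich_rank_124_flip:
  assumes "c < 3" "t < 3" "c \<noteq> t"
  shows "sandwich_rank_124 c t c2 t2 \<Longrightarrow> sandwich_rank_124 t c c2 t2"
    and "sandwich_rank_124 c1 t1 c t \<Longrightarrow> sandwich_rank_124 c1 t1 t c"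
proof -
  define H where "H q = (if q = c \<or> q = t then hadamard else id2)" for q :: nat
  have unitary_H: "unitary2 (H q)" for q
    unfolding H_def using unitary2_hadamard unitary2_id2 by simp
  have flip: "cnot t c
      = mmul8 (tensor3 (H 0) (H 1) (H 2)) (mmul8 (cnot c t) (tensor3 (H 0) (H 1) (H 2)))"
    using hadamard_conj_cnot[OF assms] unfolding H_def tensor_at_def by simp
  show "sandwich_rank_124 t c c2 t2" if "sandwich_rank_124 c t c2 t2"
    unfolding sandwich_rank_124_def
  proof (intro allI impI)
    fix V W X :: mat2
    assume "unitary2 V" "unitary2 W" "unitary2 X"
    then have "schmidt_rank (mmul8 (cnot c t)
        (mmul8 (tensor3 (mmul2 (H 0) V) (mmul2 (H 1) W) (mmul2 (H 2) X)) (cnot c2 t2))) \<in> {1, 2, 4}"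
      using that unitary2_mmul2[OF unitary_H] unfolding sandwich_rank_124_def by simp
    moreover have "mmul8 (cnot t c) (mmul8 (tensor3 V W X) (cnot c2 t2)) =
      mmul8 (tensor3 (H 0) (H 1) (H 2)) (mmul8 (cnot c t)
        (mmul8 (tensor3 (mmul2 (H 0) V) (mmul2 (H 1) W) (mmul2 (H 2) X)) (cnot c2 t2)))"
      by (simp only: flip mmul8_tensor3[symmetric] mmul8_assoc)
    ultimately show
      "schmidt_rank (mmul8 (cnot t c) (mmul8 (tensor3 V W X) (cnot c2 t2))) \<in> {1, 2, 4}"
      by (simp only: schmidt_rank_local_unitary unitary_H)
  qed
  show "sandwich_rank_124 c1 t1 t c" if "sandwich_rank_124 c1 t1 c t"
    unfolding sandwich_rank_124_def
  proof (intro allI impI)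
    fix V W X :: mat2
    assume "unitary2 V" "unitary2 W" "unitary2 X"
    then have "schmidt_rank (mmul8 (cnot c1 t1)
        (mmul8 (tensor3 (mmul2 V (H 0)) (mmul2 W (H 1)) (mmul2 X (H 2))) (cnot c t))) \<in> {1, 2, 4}"
      using that unitary2_mmul2[OF _ unitary_H] unfolding sandwich_rank_124_def by simp
    moreover have "mmul8 (cnot c1 t1) (mmul8 (tensor3 V W X) (cnot t c)) =
      mmul8 (mmul8 (cnot c1 t1)
        (mmul8 (tensor3 (mmul2 V (H 0)) (mmul2 W (H 1)) (mmul2 X (H 2))) (cnot c t)))
        (tensor3 (H 0) (H 1) (H 2))"
      by (simp only: flip mmul8_tensor3[symmetric] mmul8_assoc)
    ultimately show
      "schmidt_rank (mmul8 (cnot c1 t1) (mmul8 (tensor3 V W X) (cnot t c))) \<in> {1, 2, 4}"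
      by (simp only: schmidt_rank_local_unitary unitary_H)
  qed
qed

lemma sandwich_rank_124_by_symmetry:
  assumes same: "sandwich_rank_124 0 1 0 1" and shared_control: "sandwich_rank_124 1 0 1 2"
    and "c1 < 3" "t1 < 3" "c1 \<noteq> t1" "c2 < 3" "t2 < 3" "c2 \<noteq> t2"
  shows "sandwich_rank_124 c1 t1 c2 t2"
proof -
  note AB = sandwich_rank_124_swap_AB and BC = sandwich_rank_124_swap_BC
  note flip1 = sandwich_rank_124_flip(1) and flip2 = sandwich_rank_124_flip(2)
  have q0202: "sandwich_rank_124 0 2 0 2" using BC[OF same] by simp
  have q1212: "sandwich_rank_124 1 2 1 2" using AB[OF q0202] by simp
  have q0102: "sandwich_rank_124 0 1 0 2" using AB[OF shared_control] by simp
  have q0112: "sandwich_rank_124 0 1 1 2" using flip1[OF _ _ _ shared_control] by simp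
  have q0201: "sandwich_rank_124 0 2 0 1" using BC[OF q0102] by simp
  have q0212: "sandwich_rank_124 0 2 1 2" using flip2[OF _ _ _ BC[OF q0112]] by simp
  have q1202: "sandwich_rank_124 1 2 0 2" using AB[OF q0212] by simp
  have q1201: "sandwich_rank_124 1 2 0 1" using flip2[OF _ _ _ AB[OF q0201]] by simp
  have sorted: "sandwich_rank_124 c1 t1 c2 t2"
    if "c1 < t1" "t1 < 3" "c2 < t2" "t2 < 3" for c1 t1 c2 t2
  proof -
    have "(c1, t1) \<in> {(0,1), (0,2), (1,2)}" "(c2, t2) \<in> {(0,1), (0,2), (1,2)}"
      using that by (auto simp: less_Suc_eq numeral_3_eq_3 numeral_2_eq_2)
    then show ?thesis
      using same q0202 q1212 q0102 q0112 q0201 q0212 q1202 q1201 by auto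
  qed
  show ?thesis
    using assms(3-) sorted flip1 flip2 by (metis linorder_neqE_nat)
qed

section \<open>Lower bounds by flattening\<close>

lemma card_le_of_sum_products_eq_delta:
  fixes a b :: "nat \<Rightarrow> 'i::finite \<Rightarrow> 'a::field"
  assumes "\<And>i j. (\<Sum>k<r. a k i * b k j) = (if i = j then 1 else 0)"
  shows "CARD('i) \<le> r"
proof -
  define B where "B = (\<lambda>k. \<chi> j. b k j) ` {..<r}"
  have "axis i 1 \<in> vec.span B" for i
  proof -
    have "axis i 1 = (\<Sum>k<r. a k i *s (\<chi> j. b k j))"
      by (simp add: vec_eq_iff axis_def sum_component assms)
    also have "\<dots> \<in> vec.span B" unfolding B_def
      by (intro vec.span_sum vec.span_scale vec.span_base) auto
    finally show ?thesis .
  qed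
  then have "vec.span cart_basis \<subseteq> vec.span B"
    unfolding cart_basis_def by (intro vec.span_minimal) auto
  then have "(UNIV :: ('a^'i) set) \<subseteq> vec.span B" by (simp add: vec.span_Basis)
  then have "vec.dim (UNIV :: ('a^'i) set) \<le> card B"
    by (intro vec.span_card_ge_dim) (auto simp: B_def)
  also have "card B \<le> r" unfolding B_def
    by (metis card_image_le card_lessThan finite_lessThan)
  finally show ?thesis by (simp add: card_cart_basis)
qed

definition pair2 :: "mat2 \<Rightarrow> mat2 \<Rightarrow> complex" where
  "pair2 P A = (\<Sum>x\<in>UNIV. \<Sum>y\<in>UNIV. P x y * A x y)"

definition pair8 :: "mat8 \<Rightarrow> mat8 \<Rightarrow> complex" where
  "pair8 P T = (\<Sum>x\<in>UNIV. \<Sum>y\<in>UNIV. P x y * T x y)"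

lemma pair8_tensor3:
  "pair8 (tensor3 \<alpha> \<beta> \<gamma>) (tensor3 A B C) = pair2 \<alpha> A * pair2 \<beta> B * pair2 \<gamma> C"
  unfolding pair8_def pair2_def tensor3_def by (simp add: sum_UNIV_idx3 sum_UNIV_bool algebra_simps)

lemma pair8_sum: "pair8 P (\<lambda>i j. \<Sum>k<r. F k i j) = (\<Sum>k<r. pair8 P (F k))"
  unfolding pair8_def by (simp add: sum_distrib_left sum.swap[of _ "{..<r}"])

text \<open>Flattening A, C against B: the functionals turn a decomposition with r terms into a
  factorisation of an identity matrix through a space of dimension r.\<close>
lemma card_le_decomposition_length:
  fixes \<alpha> \<beta> \<gamma> :: "'i::finite \<Rightarrow> mat2"
  assumes "has_decomposition T r"
    and "\<And>i j. pair8 (tensor3 (\<alpha> i) (\<beta> j) (\<gamma> i)) T = (if i = j then 1 else 0)"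
  shows "CARD('i) \<le> r"
proof -
  obtain A B C where T: "T = (\<lambda>i j. \<Sum>k<r. tensor3 (A k) (B k) (C k) i j)"
    using assms(1) unfolding has_decomposition_def by blast
  have "(\<Sum>k<r. (pair2 (\<alpha> i) (A k) * pair2 (\<gamma> i) (C k)) * pair2 (\<beta> j) (B k))
      = (if i = j then 1 else 0)" for i j
    using assms(2)[of i j] unfolding T pair8_sum pair8_tensor3 by (simp add: mult_ac)
  then show ?thesis by (rule card_le_of_sum_products_eq_delta)
qed

lemma unitary2_rows:
  "unitary2 V \<Longrightarrow> V x False * cnj (V z False) + V x True * cnj (V z True) = (if x = z then 1 else 0)"
  unfolding unitary2_def
  by (drule conjunct1, drule fun_cong[of _ _ x], drule fun_cong[of _ _ z])
     (simp add: mmul2_def adj2_def id2_def sum_UNIV_bool)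

lemma unitary2_cols:
  "unitary2 V \<Longrightarrow> cnj (V False x) * V False z + cnj (V True x) * V True z = (if x = z then 1 else 0)"
  unfolding unitary2_def
  by (drule conjunct2, drule fun_cong[of _ _ x], drule fun_cong[of _ _ z])
     (simp add: mmul2_def adj2_def id2_def sum_UNIV_bool)

lemma unitary2_row_nonzero: "unitary2 V \<Longrightarrow> \<exists>y. V x y \<noteq> 0"
  using unitary2_rows[of V x x] by (metis add.right_neutral mult_zero_left zero_neq_one)

lemma unitary2_zero_entry:
  assumes "unitary2 V" and "V x y = 0"
  shows "(V False True = 0 \<and> V True False = 0) \<or> (V False False = 0 \<and> V True True = 0)"
proof -
  have "V x (\<not> y) \<noteq> 0" "V (\<not> x) y \<noteq> 0"
    using unitary2_rows[OF assms(1), of x x] unitary2_cols[OF assms(1), of y y] assms(2)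
    by (cases x; cases y; auto)+
  moreover have "V x y * cnj (V (\<not> x) y) + V x (\<not> y) * cnj (V (\<not> x) (\<not> y)) = 0"
    using unitary2_rows[OF assms(1), of x "\<not> x"] by (cases y) (auto simp: add.commute)
  ultimately have "V (\<not> x) (\<not> y) = 0" using assms(2) by simp
  with assms(2) show ?thesis by (cases x; cases y) auto
qed

lemma hadamard_conj_apply:
  "mmul2 hadamard (mmul2 W hadamard) s t
     = (\<Sum>x\<in>UNIV. \<Sum>y\<in>UNIV. hadamard_sign s x * hadamard_sign t y * W x y) / 2"
proof -
  have "hadamard s x * (W x y * hadamard y t) = hadamard_sign s x * hadamard_sign t y * W x y / 2"
    for x y
    using hadamard_times_hadamard[of s x y t]
    by (simp add: hadamard_sign_def mult.commute mult.left_commute)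
  then show ?thesis
    unfolding mmul2_def sum_UNIV_bool distrib_left by (simp only: add_divide_distrib add_ac)
qed

lemma unitary2_hadamard_conj_zero_entry:
  assumes "unitary2 W" and "mmul2 hadamard (mmul2 W hadamard) s t = 0"
  shows "(W True True = W False False \<and> W True False = W False True)
       \<or> (W True True = - W False False \<and> W True False = - W False True)"
proof -
  have "unitary2 (mmul2 hadamard (mmul2 W hadamard))"
    by (intro unitary2_mmul2 unitary2_hadamard assms(1))
  from unitary2_zero_entry[OF this assms(2)] show ?thesis
    unfolding hadamard_conj_apply by (simp add: sum_UNIV_bool hadamard_sign_def) algebra
qed

section \<open>The two normal forms\<close>

definition perm_mat8 :: "(idx3 \<Rightarrow> idx3) \<Rightarrow> mat8" where
  "perm_mat8 f = (\<lambda>i j. if j = f i then 1 else 0)"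

lemma mmul8_perm_mat8_left: "mmul8 (perm_mat8 f) M = (\<lambda>i k. M (f i) k)"
  unfolding mmul8_def perm_mat8_def
  by (simp add: fun_eq_iff if_distrib[where f="\<lambda>x. x * _"] cong: if_cong)

lemma mmul8_perm_mat8_right:
  assumes "\<And>x. g (g x) = x"
  shows "mmul8 M (perm_mat8 g) = (\<lambda>i k. M i (g k))"
proof -
  have "k = g j \<longleftrightarrow> j = g k" for k j using assms by metis
  then show ?thesis unfolding mmul8_def perm_mat8_def
    by (simp add: fun_eq_iff if_distrib[where f="\<lambda>x. _ * x"] cong: if_cong)
qed

lemma cnot_0_1_eq_perm_mat8: "cnot 0 1 = perm_mat8 (\<lambda>(a,b,c). (a, b \<noteq> a, c))"
  by (auto simp: fun_eq_iff cnot_def perm_mat8_def tensor_at_def tensor3_def proj0_def proj1_def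
      sigma1_def id2_def)

lemma cnot_1_0_eq_perm_mat8: "cnot 1 0 = perm_mat8 (\<lambda>(a,b,c). (a \<noteq> b, b, c))"
  by (auto simp: fun_eq_iff cnot_def perm_mat8_def tensor_at_def tensor3_def proj0_def proj1_def
      sigma1_def id2_def)

lemma cnot_1_2_eq_perm_mat8: "cnot 1 2 = perm_mat8 (\<lambda>(a,b,c). (a, b, c \<noteq> b))"
  by (auto simp: fun_eq_iff cnot_def perm_mat8_def tensor_at_def tensor3_def proj0_def proj1_def
      sigma1_def id2_def)

definition same_cnot_sandwich :: "mat2 \<Rightarrow> mat2 \<Rightarrow> mat2 \<Rightarrow> mat8" where
  "same_cnot_sandwich V W X = (\<lambda>(a,b,c) (a',b',c'). V a a' * W (b \<noteq> a) (b' \<noteq> a') * X c c')"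

definition shared_control_sandwich :: "mat2 \<Rightarrow> mat2 \<Rightarrow> mat2 \<Rightarrow> mat8" where
  "shared_control_sandwich V W X = (\<lambda>(a,b,c) (a',b',c'). V (a \<noteq> b) a' * W b b' * X c (c' \<noteq> b'))"

lemma cnot_0_1_sandwich:
  "mmul8 (cnot 0 1) (mmul8 (tensor3 V W X) (cnot 0 1)) = same_cnot_sandwich V W X"
  unfolding cnot_0_1_eq_perm_mat8 mmul8_perm_mat8_left
  by (subst mmul8_perm_mat8_right) (auto simp: fun_eq_iff tensor3_def same_cnot_sandwich_def)

lemma cnot_1_0_1_2_sandwich:
  "mmul8 (cnot 1 0) (mmul8 (tensor3 V W X) (cnot 1 2)) = shared_control_sandwich V W X"
  unfolding cnot_1_0_eq_perm_mat8 cnot_1_2_eq_perm_mat8 mmul8_perm_mat8_left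
  by (subst mmul8_perm_mat8_right) (auto simp: fun_eq_iff tensor3_def shared_control_sandwich_def)

lemma same_cnot_sandwich_nonzero:
  assumes "unitary2 V" "unitary2 W" "unitary2 X"
  shows "same_cnot_sandwich V W X \<noteq> (\<lambda>i j. 0)"
proof
  obtain x y z where "V False x \<noteq> 0" "W False y \<noteq> 0" "X False z \<noteq> 0"
    using unitary2_row_nonzero assms by metis
  moreover assume "same_cnot_sandwich V W X = (\<lambda>i j. 0)"
  then have "same_cnot_sandwich V W X (False, False, False) (x, y \<noteq> x, z) = 0" by simp
  ultimately show False unfolding same_cnot_sandwich_def by (cases x; cases y) auto
qed

lemma same_cnot_sandwich_has_decomposition_4: "has_decomposition (same_cnot_sandwich V W X) 4"
  by (rule has_decomposition_4I[where
        Aa="\<lambda>x y. if \<not> x \<and> \<not> y then V x y else 0" and Ba=W and Ca=X and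
        Ab="\<lambda>x y. if \<not> x \<and> y then V x y else 0" and Bb="\<lambda>x y. W x (\<not> y)" and Cb=X and
        Ac="\<lambda>x y. if x \<and> \<not> y then V x y else 0" and Bc="\<lambda>x y. W (\<not> x) y" and Cc=X and
        Ad="\<lambda>x y. if x \<and> y then V x y else 0" and Bd="\<lambda>x y. W (\<not> x) (\<not> y)" and Cd=X])
     (auto simp: fun_eq_iff same_cnot_sandwich_def tensor3_def all_bool_eq)

lemma same_cnot_sandwich_has_decomposition_2:
  assumes "(V False True = 0 \<and> V True False = 0) \<or> (V False False = 0 \<and> V True True = 0)
    \<or> (W True True = W False False \<and> W True False = W False True)
    \<or> (W True True = - W False False \<and> W True False = - W False True)"
  shows "has_decomposition (same_cnot_sandwich V W X) 2"
  using assms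
proof (elim disjE conjE)
  assume "V False True = 0" "V True False = 0"
  then show ?thesis
    by (intro has_decomposition_2I[where Aa="\<lambda>x y. if \<not> x \<and> \<not> y then V x y else 0" and Ba=W and Ca=X
          and Ab="\<lambda>x y. if x \<and> y then V x y else 0" and Bb="\<lambda>x y. W (\<not> x) (\<not> y)" and Cb=X])
      (auto simp: fun_eq_iff same_cnot_sandwich_def tensor3_def all_bool_eq)
next
  assume "V False False = 0" "V True True = 0"
  then show ?thesis
    by (intro has_decomposition_2I[where Aa="\<lambda>x y. if \<not> x \<and> y then V x y else 0"
          and Ba="\<lambda>x y. W x (\<not> y)"
          and Ca=X and Ab="\<lambda>x y. if x \<and> \<not> y then V x y else 0" and Bb="\<lambda>x y. W (\<not> x) y" and Cb=X])
      (auto simp: fun_eq_iff same_cnot_sandwich_def tensor3_def all_bool_eq)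
next
  assume "W True True = W False False" "W True False = W False True"
  then show ?thesis
    by (intro has_decomposition_2I[where Aa="\<lambda>x y. if x = y then V x y else 0" and Ba=W and Ca=X
          and Ab="\<lambda>x y. if x \<noteq> y then V x y else 0" and Bb="\<lambda>x y. W x (\<not> y)" and Cb=X])
      (auto simp: fun_eq_iff same_cnot_sandwich_def tensor3_def all_bool_eq)
next
  assume "W True True = - W False False" "W True False = - W False True"
  then show ?thesis
    by (intro has_decomposition_2I[where Aa="\<lambda>x y. if x = y then hadamard_sign x x * V x y else 0"
          and Ba=W and Ca=X and Ab="\<lambda>x y. if x \<noteq> y then hadamard_sign x x * V x y else 0"
          and Bb="\<lambda>x y. W x (\<not> y)" and Cb=X])
      (auto simp: fun_eq_iff same_cnot_sandwich_def tensor3_def hadamard_sign_def all_bool_eq)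
qed

lemma same_cnot_sandwich_rank_ge_4:
  assumes "unitary2 X" and V_nonzero: "\<And>x y. V x y \<noteq> 0"
    and W_nonzero: "\<And>s t. mmul2 hadamard (mmul2 W hadamard) s t \<noteq> 0"
    and "has_decomposition (same_cnot_sandwich V W X) r"
  shows "4 \<le> r"
proof -
  let ?Wh = "mmul2 hadamard (mmul2 W hadamard)"
  \<comment> \<open>\<gamma> reads off the first row of X, while \<alpha> and \<beta> divide out the entries of V and of
    W in the Hadamard basis, leaving the orthogonal sign patterns\<close>
  define \<alpha> :: "bool \<times> bool \<Rightarrow> mat2"
    where "\<alpha> = (\<lambda>(u,v) x y. hadamard_sign u x * hadamard_sign v y / V x y)"
  define \<beta> :: "bool \<times> bool \<Rightarrow> mat2"
    where "\<beta> = (\<lambda>(s,t) x y. hadamard_sign s x * hadamard_sign t y / (8 * ?Wh s t))"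
  define \<gamma> :: "bool \<times> bool \<Rightarrow> mat2" where "\<gamma> = (\<lambda>_ x y. if x then 0 else cnj (X False y))"
  have "pair8 (tensor3 (\<alpha> i) (\<beta> j) (\<gamma> i)) (same_cnot_sandwich V W X) = (if i = j then 1 else 0)"
    for i j :: "bool \<times> bool"
  proof -
    obtain u v s t where ij: "i = (u, v)" "j = (s, t)" by fastforce
    have X_row: "pair2 (\<gamma> i) X = 1"
      using unitary2_rows[OF assms(1), of False False]
      unfolding pair2_def \<gamma>_def by (simp add: sum_UNIV_bool mult.commute split: prod.split)
    have W_part: "(\<Sum>b\<in>UNIV. \<Sum>b'\<in>UNIV. \<beta> j b b' * W (b \<noteq> a) (b' \<noteq> a'))
        = hadamard_sign s a * hadamard_sign t a' / 4" for a a'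
    proof -
      have "(\<Sum>b\<in>UNIV. \<Sum>b'\<in>UNIV. hadamard_sign s b * hadamard_sign t b' * W (b \<noteq> a) (b' \<noteq> a'))
          = 2 * hadamard_sign s a * hadamard_sign t a' * ?Wh s t"
        unfolding hadamard_conj_apply hadamard_sign_def
        by (cases a; cases a'; cases s; cases t) (simp_all add: sum_UNIV_bool algebra_simps)
      then show ?thesis
        unfolding \<beta>_def ij using W_nonzero[of s t] by (simp add: sum_divide_distrib[symmetric])
    qed
    have V_part: "\<alpha> i a a' * V a a' = hadamard_sign u a * hadamard_sign v a'" for a a'
      unfolding \<alpha>_def ij using V_nonzero[of a a'] by simp
    have "pair8 (tensor3 (\<alpha> i) (\<beta> j) (\<gamma> i)) (same_cnot_sandwich V W X) = pair2 (\<gamma> i) X *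
        (\<Sum>a\<in>UNIV. \<Sum>a'\<in>UNIV. \<alpha> i a a' * V a a' *
          (\<Sum>b\<in>UNIV. \<Sum>b'\<in>UNIV. \<beta> j b b' * W (b \<noteq> a) (b' \<noteq> a')))"
      unfolding pair8_def pair2_def tensor3_def same_cnot_sandwich_def
      by (simp add: sum_UNIV_idx3 sum_UNIV_bool algebra_simps)
    also have "\<dots> = (if i = j then 1 else 0)"
      unfolding X_row W_part V_part unfolding ij
      by (cases u; cases v; cases s; cases t) (simp_all add: sum_UNIV_bool hadamard_sign_def)
    finally show ?thesis .
  qed
  from card_le_decomposition_length[OF assms(4) this] show ?thesis by simp
qed

lemma sandwich_rank_124_same: "sandwich_rank_124 0 1 0 1"
  unfolding sandwich_rank_124_def cnot_0_1_sandwich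
proof (intro allI impI)
  fix V W X assume unitary: "unitary2 V" "unitary2 W" "unitary2 X"
  show "schmidt_rank (same_cnot_sandwich V W X) \<in> {1, 2, 4}"
  proof (cases "(\<forall>x y. V x y \<noteq> 0) \<and> (\<forall>s t. mmul2 hadamard (mmul2 W hadamard) s t \<noteq> 0)")
    case True
    then have "schmidt_rank (same_cnot_sandwich V W X) = 4"
      using same_cnot_sandwich_rank_ge_4[OF unitary(3)]
      by (intro schmidt_rank_eqI same_cnot_sandwich_has_decomposition_4) blast
    then show ?thesis by simp
  next
    case False
    then have "has_decomposition (same_cnot_sandwich V W X) 2"
      using unitary2_zero_entry[OF unitary(1)] unitary2_hadamard_conj_zero_entry[OF unitary(2)]
      by (intro same_cnot_sandwich_has_decomposition_2) blast
    then show ?thesis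
      using schmidt_rank_1_or_2 same_cnot_sandwich_nonzero[OF unitary] by blast
  qed
qed

lemma shared_control_sandwich_nonzero:
  assumes "unitary2 V" "unitary2 W" "unitary2 X"
  shows "shared_control_sandwich V W X \<noteq> (\<lambda>i j. 0)"
proof
  obtain x y z where "V False x \<noteq> 0" "W False y \<noteq> 0" "X False z \<noteq> 0"
    using unitary2_row_nonzero assms by metis
  moreover assume "shared_control_sandwich V W X = (\<lambda>i j. 0)"
  then have "shared_control_sandwich V W X (False, False, False) (x, y, z \<noteq> y) = 0" by simp
  ultimately show False unfolding shared_control_sandwich_def by (cases y; cases z) auto
qed

lemma shared_control_sandwich_has_decomposition_4:
  "has_decomposition (shared_control_sandwich V W X) 4"
  by (rule has_decomposition_4I[where
        Aa=V and Ba="\<lambda>x y. if \<not> x \<and> \<not> y then W x y else 0" and Ca=X and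
        Ab=V and Bb="\<lambda>x y. if \<not> x \<and> y then W x y else 0" and Cb="\<lambda>x y. X x (\<not> y)" and
        Ac="\<lambda>x y. V (\<not> x) y" and Bc="\<lambda>x y. if x \<and> \<not> y then W x y else 0" and Cc=X and
        Ad="\<lambda>x y. V (\<not> x) y" and Bd="\<lambda>x y. if x \<and> y then W x y else 0" and Cd="\<lambda>x y. X x (\<not> y)"])
     (auto simp: fun_eq_iff shared_control_sandwich_def tensor3_def all_bool_eq)

lemma shared_control_sandwich_has_decomposition_2:
  assumes "(W False True = 0 \<and> W True False = 0) \<or> (W False False = 0 \<and> W True True = 0)"
  shows "has_decomposition (shared_control_sandwich V W X) 2"
  using assms
proof (elim disjE conjE)
  assume "W False True = 0" "W True False = 0"
  then show ?thesis
    by (intro has_decomposition_2I[where Aa=V and Ba="\<lambda>x y. if \<not> x \<and> \<not> y then W x y else 0" and Ca=X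
          and Ab="\<lambda>x y. V (\<not> x) y" and Bb="\<lambda>x y. if x \<and> y then W x y else 0"
          and Cb="\<lambda>x y. X x (\<not> y)"])
      (auto simp: fun_eq_iff shared_control_sandwich_def tensor3_def all_bool_eq)
next
  assume "W False False = 0" "W True True = 0"
  then show ?thesis
    by (intro has_decomposition_2I[where Aa=V and Ba="\<lambda>x y. if \<not> x \<and> y then W x y else 0"
          and Ca="\<lambda>x y. X x (\<not> y)" and Ab="\<lambda>x y. V (\<not> x) y"
          and Bb="\<lambda>x y. if x \<and> \<not> y then W x y else 0"
          and Cb=X])
      (auto simp: fun_eq_iff shared_control_sandwich_def tensor3_def all_bool_eq)
qed

lemma shared_control_sandwich_rank_ge_4:
  assumes "unitary2 V" "unitary2 X" and W_nonzero: "\<And>x y. W x y \<noteq> 0"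
    and "has_decomposition (shared_control_sandwich V W X) r"
  shows "4 \<le> r"
proof -
  define \<alpha> :: "bool \<times> bool \<Rightarrow> mat2" where "\<alpha> = (\<lambda>(u,_) x y. if x = u then cnj (V False y) else 0)"
  define \<beta> :: "bool \<times> bool \<Rightarrow> mat2" where "\<beta> = (\<lambda>(s,t) x y. if x = s \<and> y = t then 1 / W x y else 0)"
  define \<gamma> :: "bool \<times> bool \<Rightarrow> mat2" where "\<gamma> = (\<lambda>(_,v) x y. if y = v then cnj (X x False) else 0)"
  have "pair8 (tensor3 (\<alpha> i) (\<beta> j) (\<gamma> i)) (shared_control_sandwich V W X)
      = (if i = j then 1 else 0)"
    for i j :: "bool \<times> bool"
  proof -
    obtain u v s t where ij: "i = (u, v)" "j = (s, t)" by fastforce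
    have V_part: "(\<Sum>a\<in>UNIV. \<Sum>a'\<in>UNIV. \<alpha> i a a' * V (a \<noteq> b) a') = (if u = b then 1 else 0)" for b
      using unitary2_rows[OF assms(1), of "u \<noteq> b" False] unfolding \<alpha>_def ij
      by (cases u; cases b) (simp_all add: sum_UNIV_bool mult.commute)
    have X_part: "(\<Sum>c\<in>UNIV. \<Sum>c'\<in>UNIV. \<gamma> i c c' * X c (c' \<noteq> b')) = (if v = b' then 1 else 0)" for b'
      using unitary2_cols[OF assms(2), of False "v \<noteq> b'"] unfolding \<gamma>_def ij
      by (cases v; cases b') (simp_all add: sum_UNIV_bool mult.commute)
    have "pair8 (tensor3 (\<alpha> i) (\<beta> j) (\<gamma> i)) (shared_control_sandwich V W X) =
        (\<Sum>b\<in>UNIV. \<Sum>b'\<in>UNIV. \<beta> j b b' * W b b' *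
          (\<Sum>a\<in>UNIV. \<Sum>a'\<in>UNIV. \<alpha> i a a' * V (a \<noteq> b) a') *
          (\<Sum>c\<in>UNIV. \<Sum>c'\<in>UNIV. \<gamma> i c c' * X c (c' \<noteq> b')))"
      unfolding pair8_def tensor3_def shared_control_sandwich_def
      by (simp add: sum_UNIV_idx3 sum_UNIV_bool algebra_simps)
    also have "\<dots> = (if i = j then 1 else 0)"
      unfolding V_part X_part unfolding \<beta>_def ij
      using W_nonzero by (cases u; cases v; cases s; cases t) (simp_all add: sum_UNIV_bool)
    finally show ?thesis .
  qed
  from card_le_decomposition_length[OF assms(4) this] show ?thesis by simp
qed

lemma sandwich_rank_124_shared_control: "sandwich_rank_124 1 0 1 2"
  unfolding sandwich_rank_124_def cnot_1_0_1_2_sandwich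
proof (intro allI impI)
  fix V W X assume unitary: "unitary2 V" "unitary2 W" "unitary2 X"
  show "schmidt_rank (shared_control_sandwich V W X) \<in> {1, 2, 4}"
  proof (cases "\<forall>x y. W x y \<noteq> 0")
    case True
    then have "schmidt_rank (shared_control_sandwich V W X) = 4"
      using shared_control_sandwich_rank_ge_4[OF unitary(1,3)]
      by (intro schmidt_rank_eqI shared_control_sandwich_has_decomposition_4) blast
    then show ?thesis by simp
  next
    case False
    then have "has_decomposition (shared_control_sandwich V W X) 2"
      using unitary2_zero_entry[OF unitary(2)]
      by (intro shared_control_sandwich_has_decomposition_2) blast
    then show ?thesis
      using schmidt_rank_1_or_2 shared_control_sandwich_nonzero[OF unitary] by blast
  qed
qed

theorem theorem6:
  fixes L1 L2 L3 C1 C2 :: mat8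
  assumes "local_unitary L1" and "local_unitary L2" and "local_unitary L3"
    and "is_cnot C1" and "is_cnot C2"
  shows "schmidt_rank (mmul8 L1 (mmul8 C1 (mmul8 L2 (mmul8 C2 L3)))) \<in> {1, 2, 4}"
proof -
  obtain V1 W1 X1 where L1: "unitary2 V1" "unitary2 W1" "unitary2 X1" "L1 = tensor3 V1 W1 X1"
    using assms(1) unfolding local_unitary_def by blast
  obtain V2 W2 X2 where L2: "unitary2 V2" "unitary2 W2" "unitary2 X2" "L2 = tensor3 V2 W2 X2"
    using assms(2) unfolding local_unitary_def by blast
  obtain V3 W3 X3 where L3: "unitary2 V3" "unitary2 W3" "unitary2 X3" "L3 = tensor3 V3 W3 X3"
    using assms(3) unfolding local_unitary_def by blast
  obtain c1 t1 c2 t2 where C: "c1 < 3" "t1 < 3" "c1 \<noteq> t1" "C1 = cnot c1 t1"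
      "c2 < 3" "t2 < 3" "c2 \<noteq> t2" "C2 = cnot c2 t2"
    using assms(4,5) unfolding is_cnot_def by blast
  have "schmidt_rank (mmul8 L1 (mmul8 C1 (mmul8 L2 (mmul8 C2 L3))))
      = schmidt_rank (mmul8 (mmul8 C1 (mmul8 L2 C2)) L3)"
    unfolding L1(4) schmidt_rank_local_unitary(1)[OF L1(1-3)] by (simp only: mmul8_assoc)
  also have "\<dots> = schmidt_rank (mmul8 C1 (mmul8 L2 C2))"
    unfolding L3(4) by (rule schmidt_rank_local_unitary(2)[OF L3(1-3)])
  also have "\<dots> \<in> {1, 2, 4}"
    using sandwich_rank_124_by_symmetry[OF sandwich_rank_124_same sandwich_rank_124_shared_control
        C(1-3,5-7)] L2
    unfolding sandwich_rank_124_def C(4,8) by blast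
  finally show ?thesis .
qed

end
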